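(* Let $d\ge 2$, let $\mu$ be a Borel probability measure on $S^{d-1}$, and let $2\le \ell\le d$ be an integer. Then \[ \mu^{\otimes \ell}\bigl(\{(u_1,\dots,u_\ell)\in (S^{d-1})^\ell : u_i\perp u_j \text{ for all } i\ne j\}\bigr)\le \frac{d!}{(d-\ell)!\, d^{\ell}} . \]
   Context: $S^{d-1}$ is the unit sphere in $\mathbb R^d$. $\mu^{\otimes\ell}$ denotes the $\ell$-fold product measure of $\mu$ with itself on $(S^{d-1})^\ell$; i.e. the probability that $\ell$ independent $\mu$-distributed random unit vectors are pairwise orthogonal. *)

theory Defs
  imports "HOL-Probability.Probability"
begin

end

theory Submission
  imports Defs
begin

(* Let Q v w = E[(x . v) (x . w)] be the second-moment form of mu and e_0, ..., e_(d-1) an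
   orthonormal basis diagonalising it, with eigenvalues alpha_c = Q e_c e_c >= 0 summing to
   E[|x|^2] = 1.  For u = (u_0, ..., u_(l-1)) and k : [l] -> [d] let D_k u = det (u_j . e_(k i)).
   By Parseval, sum_k (D_k u)^2 = l! whenever the u_i are orthonormal, so the probability in
   question is at most E[sum_k (D_k u)^2] / l!.  Expanding the determinant and integrating factor by
   factor, all cross terms vanish in the eigenbasis, so E[(D_k u)^2] = l! prod_i alpha_(k i) for
   injective k, while D_k = 0 otherwise.  The bound is therefore l! e_l(alpha), and Maclaurin's
   inequality e_l(alpha) <= (d choose l) (sum_c alpha_c / d)^l finishes the proof. *)

section \<open>Leibniz determinants\<close>

definition leibniz_det :: "nat \<Rightarrow> (nat \<Rightarrow> nat \<Rightarrow> real) \<Rightarrow> real" where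
  "leibniz_det n X = (\<Sum>p | p permutes {..<n}. of_int (sign p) * (\<Prod>i<n. X i (p i)))"

lemma leibniz_det_identical_rows:
  assumes "a < n" "b < n" "a \<noteq> b" "X a = X b"
  shows "leibniz_det n X = 0"
proof -
  let ?t = "Transposition.transpose a b"
  let ?f = "\<lambda>p. of_int (sign p) * (\<Prod>i<n. X i (p i))"
  have t: "?t permutes {..<n}"
    using assms by (intro permutes_swap_id) auto
  have "?f (p \<circ> ?t) = - ?f p" if p: "p permutes {..<n}" for p
  proof -
    have "sign (p \<circ> ?t) = - sign p"
      using sign_compose[of p ?t] p t assms(3)
      by (metis finite_lessThan permutation_permutes sign_swap_id mult.right_neutral mult_minus_right)
    moreover have "(\<Prod>i<n. X i ((p \<circ> ?t) i)) = (\<Prod>i<n. X (?t i) (p (?t i)))"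
      using assms(4) by (intro prod.cong refl) (auto simp: Transposition.transpose_def)
    moreover have "\<dots> = (\<Prod>i<n. X i (p i))"
      using prod.permute[OF t, of "\<lambda>i. X i (p i)"] by (simp add: o_def)
    ultimately show ?thesis by simp
  qed
  then have "leibniz_det n X = (\<Sum>p | p permutes {..<n}. - ?f p)"
    unfolding leibniz_det_def by (subst sum_permutations_compose_right[OF t]) (rule sum.cong, auto)
  then show ?thesis
    by (simp add: sum_negf leibniz_det_def)
qed

lemma leibniz_det_power2:
  "(leibniz_det n X)\<^sup>2 = (\<Sum>\<sigma> | \<sigma> permutes {..<n}. \<Sum>\<tau> | \<tau> permutes {..<n}.
     of_int (sign \<sigma> * sign \<tau>) * (\<Prod>i<n. X i (\<sigma> i) * X i (\<tau> i)))"
  unfolding leibniz_det_def power2_eq_square sum_product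
  by (intro sum.cong refl) (simp add: prod.distrib mult_ac)

lemma permutes_neq_witness:
  assumes "\<sigma> permutes {..<n}" "\<tau> permutes {..<n}" "\<sigma> \<noteq> \<tau>"
  obtains i where "i < n" "\<sigma> i \<noteq> \<tau> i"
  using assms by (metis ext lessThan_iff permutes_def)

lemma prod_permutes_reindex_inv:
  assumes "\<sigma> permutes {..<n}"
  shows "(\<Prod>i<n. h (\<sigma> i) i) = (\<Prod>j<n. h j (inv \<sigma> j))"
  using prod.permute[OF assms, of "\<lambda>j. h j (inv \<sigma> j)"] permutes_inverses(2)[OF assms]
  by (simp add: o_def)


section \<open>Maclaurin's inequality\<close>

definition falling_fact :: "nat \<Rightarrow> nat \<Rightarrow> real" where
  "falling_fact n k = (\<Prod>i<k. real n - real i)"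

lemma falling_fact_nonneg: "falling_fact n k \<ge> 0"
proof (cases "k \<le> n")
  case True
  then show ?thesis unfolding falling_fact_def by (intro prod_nonneg) auto
next
  case False
  then have "n \<in> {..<k}" by simp
  then show ?thesis unfolding falling_fact_def by (subst prod_zero) auto
qed

lemma falling_fact_Suc: "falling_fact n (Suc k) = falling_fact n k * (real n - real k)"
  unfolding falling_fact_def by simp

lemma falling_fact_Suc_Suc: "falling_fact (Suc n) (Suc k) = (real n + 1) * falling_fact n k"
  unfolding falling_fact_def by (subst prod.lessThan_Suc_shift) auto

lemma falling_fact_eq_fact_div: "k \<le> n \<Longrightarrow> falling_fact n k = fact n / fact (n - k)"
proof (induction k)
  case 0
  then show ?case by (simp add: falling_fact_def)
next
  case (Suc k)
  have "fact (n - k) = (fact (n - Suc k) :: real) * (real n - real k)"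
    using Suc.prems by (simp add: Suc_diff_Suc[symmetric])
  with Suc show ?case by (simp add: falling_fact_Suc)
qed

lemma power_Suc_above_tangent:
  fixes t m :: real
  assumes "t \<ge> 0" "m \<ge> 0"
  shows "t ^ k * ((real k + 1) * m - real k * t) \<le> m ^ Suc k"
proof (cases "t = 0")
  case True
  with assms show ?thesis by (cases k) auto
next
  case False
  with assms have t: "t > 0" by simp
  have "t ^ k * ((real k + 1) * m - real k * t) = t ^ Suc k * (1 + real (Suc k) * (m / t - 1))"
    using t by (simp add: field_simps)
  also have "\<dots> \<le> t ^ Suc k * (1 + (m / t - 1)) ^ Suc k"
    using assms t by (intro mult_left_mono Bernoulli_inequality) auto
  also have "\<dots> = m ^ Suc k"
    using t by (simp add: power_mult_distrib[symmetric])
  finally show ?thesis .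
qed

(* The induction step of Maclaurin's inequality in the number of variables: t is the mean of the
   first n values and a the new one. *)
lemma maclaurin_step:
  fixes t a :: real
  assumes "t \<ge> 0" "a \<ge> 0"
  shows "falling_fact n (Suc k) * t ^ Suc k + a * real (Suc k) * (falling_fact n k * t ^ k)
     \<le> falling_fact (Suc n) (Suc k) * ((real n * t + a) / (real n + 1)) ^ Suc k"
proof -
  define m where "m = (real n * t + a) / (real n + 1)"
  have "m \<ge> 0" using assms by (simp add: m_def)
  have m_eq: "(real n - real k) * t + (real k + 1) * a = (real n + 1) * ((real k + 1) * m - real k * t)"
    by (simp add: m_def field_simps)
  have "falling_fact n (Suc k) * t ^ Suc k + a * real (Suc k) * (falling_fact n k * t ^ k)
      = falling_fact n k * (t ^ k * ((real n - real k) * t + (real k + 1) * a))"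
    by (simp add: falling_fact_Suc algebra_simps)
  also have "\<dots> = falling_fact n k * (real n + 1) * (t ^ k * ((real k + 1) * m - real k * t))"
    by (simp add: m_eq)
  also have "\<dots> \<le> falling_fact n k * (real n + 1) * m ^ Suc k"
    using \<open>m \<ge> 0\<close> assms falling_fact_nonneg
    by (intro mult_left_mono power_Suc_above_tangent) auto
  finally show ?thesis
    by (simp add: falling_fact_Suc_Suc m_def mult_ac)
qed

definition injections :: "'i set \<Rightarrow> nat \<Rightarrow> ('i \<Rightarrow> nat) set" where
  "injections I n = {k \<in> I \<rightarrow>\<^sub>E {..<n}. inj_on k I}"

(* inj_prod_sum alpha I n = (card I)! * e_(card I) (alpha 0, ..., alpha (n - 1)), where e_m is the
   m-th elementary symmetric polynomial. *)
definition inj_prod_sum :: "(nat \<Rightarrow> real) \<Rightarrow> 'i set \<Rightarrow> nat \<Rightarrow> real" where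
  "inj_prod_sum \<alpha> I n = (\<Sum>k\<in>injections I n. \<Prod>i\<in>I. \<alpha> (k i))"

lemma finite_injections: "finite I \<Longrightarrow> finite (injections I n)"
  unfolding injections_def by (rule finite_subset[OF _ finite_PiE[of I "\<lambda>_. {..<n}"]]) auto

lemma injections_Suc:
  "injections I (Suc n) = injections I n \<union> (\<Union>p\<in>I. (\<lambda>k. k(p := n)) ` injections (I - {p}) n)"
proof (intro equalityI subsetI)
  fix k assume k: "k \<in> injections I (Suc n)"
  show "k \<in> injections I n \<union> (\<Union>p\<in>I. (\<lambda>k. k(p := n)) ` injections (I - {p}) n)"
  proof (cases "n \<in> k ` I")
    case False
    then have "k \<in> injections I n"
      using k by (auto simp: injections_def PiE_iff less_Suc_eq image_iff)
    then show ?thesis by blast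
  next
    case True
    then obtain p where p: "p \<in> I" "k p = n" by auto
    have "k(p := undefined) \<in> injections (I - {p}) n"
      using k p by (auto simp: injections_def PiE_iff less_Suc_eq inj_on_def)
    moreover have "k = (k(p := undefined))(p := n)" using p by auto
    ultimately show ?thesis using p by blast
  qed
next
  fix k assume "k \<in> injections I n \<union> (\<Union>p\<in>I. (\<lambda>k. k(p := n)) ` injections (I - {p}) n)"
  then show "k \<in> injections I (Suc n)"
    by (auto simp: injections_def PiE_iff inj_on_def extensional_def less_Suc_eq split: if_splits)
qed

lemma inj_prod_sum_fun_upd:
  assumes "finite I" "p \<in> I"
  shows "(\<Sum>k\<in>(\<lambda>k. k(p := n)) ` injections (I - {p}) n. \<Prod>i\<in>I. \<alpha> (k i))
    = \<alpha> n * inj_prod_sum \<alpha> (I - {p}) n"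
proof -
  have "inj_on (\<lambda>k. k(p := n)) (injections (I - {p}) n)"
  proof (rule inj_onI, rule ext)
    fix k k' x
    assume "k \<in> injections (I - {p}) n" "k' \<in> injections (I - {p}) n" "k(p := n) = k'(p := n)"
    then show "k x = k' x"
      by (cases "x = p") (auto simp: injections_def PiE_iff extensional_def dest: fun_cong[where x = x])
  qed
  then have "(\<Sum>k\<in>(\<lambda>k. k(p := n)) ` injections (I - {p}) n. \<Prod>i\<in>I. \<alpha> (k i))
      = (\<Sum>k\<in>injections (I - {p}) n. \<alpha> n * (\<Prod>i\<in>I - {p}. \<alpha> (k i)))"
    using assms by (simp add: sum.reindex prod.remove[of I p])
  then show ?thesis
    by (simp add: inj_prod_sum_def sum_distrib_left)
qed

lemma inj_prod_sum_Suc: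
  assumes "finite I"
  shows "inj_prod_sum \<alpha> I (Suc n) = inj_prod_sum \<alpha> I n + \<alpha> n * (\<Sum>p\<in>I. inj_prod_sum \<alpha> (I - {p}) n)"
proof -
  let ?U = "\<lambda>p. (\<lambda>k. k(p := n)) ` injections (I - {p}) n"
  have fin: "finite (?U p)" for p
    using assms by (simp add: finite_injections)
  have "injections I n \<inter> (\<Union>p\<in>I. ?U p) = {}"
    by (auto simp: injections_def PiE_iff)
  moreover have "?U p \<inter> ?U q = {}" if "p \<in> I" "q \<in> I" "p \<noteq> q" for p q
    using that by (fastforce simp: injections_def PiE_iff dest: fun_cong[where x = q])
  ultimately have "inj_prod_sum \<alpha> I (Suc n) = inj_prod_sum \<alpha> I n + (\<Sum>p\<in>I. \<Sum>k\<in>?U p. \<Prod>i\<in>I. \<alpha> (k i))"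
    unfolding inj_prod_sum_def injections_Suc using assms fin
    by (simp add: sum.union_disjoint finite_injections sum.UNION_disjoint)
  then show ?thesis
    using assms by (simp add: inj_prod_sum_fun_upd sum_distrib_left)
qed

lemma maclaurin_inequality:
  fixes I :: "'i set"
  assumes "\<And>c. \<alpha> c \<ge> 0" "finite I"
  shows "inj_prod_sum \<alpha> I n \<le> falling_fact n (card I) * ((\<Sum>c<n. \<alpha> c) / real n) ^ card I"
  using assms(2)
proof (induction n arbitrary: I)
  case 0
  have "injections I 0 = (if I = {} then {\<lambda>_. undefined} else {})"
    by (auto simp: injections_def)
  then show ?case
    using falling_fact_nonneg[of 0 "card I"] by (simp add: inj_prod_sum_def falling_fact_def)
next
  case (Suc n)
  show ?case
  proof (cases "I = {}")
    case True
    then show ?thesis by (simp add: inj_prod_sum_def injections_def falling_fact_def)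
  next
    case False
    then obtain k where k: "card I = Suc k"
      using Suc.prems by (metis card_0_eq not0_implies_Suc)
    define t where "t = (\<Sum>c<n. \<alpha> c) / real n"
    have "t \<ge> 0"
      unfolding t_def using assms(1) by (intro divide_nonneg_nonneg sum_nonneg) auto
    have IH: "inj_prod_sum \<alpha> J n \<le> falling_fact n (card J) * t ^ card J" if "finite J" for J :: "'i set"
      using Suc.IH that by (simp add: t_def)
    have "inj_prod_sum \<alpha> I (Suc n) = inj_prod_sum \<alpha> I n + \<alpha> n * (\<Sum>p\<in>I. inj_prod_sum \<alpha> (I - {p}) n)"
      by (rule inj_prod_sum_Suc[OF Suc.prems])
    also have "\<dots> \<le> falling_fact n (Suc k) * t ^ Suc k + \<alpha> n * (\<Sum>p\<in>I. falling_fact n k * t ^ k)"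
    proof (intro add_mono mult_left_mono sum_mono assms(1))
      show "inj_prod_sum \<alpha> I n \<le> falling_fact n (Suc k) * t ^ Suc k"
        using IH[of I] Suc.prems k by simp
      show "inj_prod_sum \<alpha> (I - {p}) n \<le> falling_fact n k * t ^ k" if "p \<in> I" for p
        using IH[of "I - {p}"] Suc.prems k that by simp
    qed
    also have "\<dots> = falling_fact n (Suc k) * t ^ Suc k + \<alpha> n * real (Suc k) * (falling_fact n k * t ^ k)"
      using k by simp
    also have "\<dots> \<le> falling_fact (Suc n) (Suc k) * ((real n * t + \<alpha> n) / (real n + 1)) ^ Suc k"
      using \<open>t \<ge> 0\<close> assms(1) by (rule maclaurin_step)
    also have "(real n * t + \<alpha> n) / (real n + 1) = (\<Sum>c<Suc n. \<alpha> c) / real (Suc n)"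
      by (cases "n = 0") (auto simp: t_def)
    finally show ?thesis
      using k by simp
  qed
qed


section \<open>Orthonormal bases diagonalising a symmetric bilinear form\<close>

definition orthonormal_seq :: "nat \<Rightarrow> (nat \<Rightarrow> 'a::real_inner) \<Rightarrow> bool" where
  "orthonormal_seq n e \<longleftrightarrow> (\<forall>i<n. \<forall>j<n. e i \<bullet> e j = (if i = j then 1 else 0))"

lemma orthonormal_seq_norm: "orthonormal_seq n e \<Longrightarrow> i < n \<Longrightarrow> norm (e i) = 1"
  by (simp add: orthonormal_seq_def norm_eq_sqrt_inner)

lemma orthonormal_seq_expansion:
  fixes e :: "nat \<Rightarrow> 'a::euclidean_space"
  assumes e: "orthonormal_seq DIM('a) e"
  shows "(\<Sum>c<DIM('a). (x \<bullet> e c) *\<^sub>R e c) = x"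
proof -
  let ?B = "e ` {..<DIM('a)}"
  have inj: "inj_on e {..<DIM('a)}"
    using e by (intro inj_onI) (metis lessThan_iff one_neq_zero orthonormal_seq_def)
  have orth: "pairwise orthogonal ?B"
    using e unfolding orthonormal_seq_def pairwise_def orthogonal_def by auto
  have norm: "norm b = 1" if "b \<in> ?B" for b
    using e that by (auto simp: orthonormal_seq_norm)
  then have "independent ?B"
    using pairwise_orthogonal_independent[OF orth] by force
  moreover have "card ?B = DIM('a)"
    using inj by (simp add: card_image)
  ultimately have "x \<in> span ?B"
    using card_eq_dim[of ?B UNIV] by auto
  then have "(\<Sum>b\<in>?B. (x \<bullet> b) *\<^sub>R b) = x"
    by (intro orthonormal_basis_expand[OF orth norm]) auto
  then show ?thesis
    by (simp add: sum.reindex[OF inj])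
qed

lemma orthonormal_seq_parseval:
  fixes e :: "nat \<Rightarrow> 'a::euclidean_space"
  assumes "orthonormal_seq DIM('a) e"
  shows "(\<Sum>c<DIM('a). (v \<bullet> e c) * (w \<bullet> e c)) = v \<bullet> w"
  using orthonormal_seq_expansion[OF assms, of w]
  by (metis (no_types, lifting) inner_scaleR_right inner_sum_right mult.commute sum.cong)

lemma linear_le_quadratic_imp_zero:
  fixes b C :: real
  assumes "\<And>t. 2 * t * b \<le> t\<^sup>2 * C"
  shows "b = 0"
proof (rule ccontr)
  assume "b \<noteq> 0"
  define K where "K = \<bar>C\<bar> + 1"
  have "K > 0" by (simp add: K_def)
  have "2 * (b / K) * b \<le> (b / K)\<^sup>2 * C"
    by (rule assms)
  then have "2 * K * b\<^sup>2 \<le> C * b\<^sup>2"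
    using \<open>K > 0\<close> by (simp add: field_simps power2_eq_square)
  then have "2 * K \<le> C"
    using \<open>b \<noteq> 0\<close> by simp
  then show False
    by (simp add: K_def)
qed

lemma exists_unit_orthogonal:
  fixes S :: "'a::euclidean_space set"
  assumes "finite S" "card S < DIM('a)"
  obtains x where "norm x = 1" "\<And>y. y \<in> S \<Longrightarrow> orthogonal y x"
proof -
  have "dim S < DIM('a)"
    using dim_le_card'[OF assms(1)] assms(2) by linarith
  then obtain x :: 'a where "x \<noteq> 0" "\<And>y. y \<in> span S \<Longrightarrow> orthogonal x y"
    using orthogonal_to_subspace_exists by blast
  then show ?thesis
    by (intro that[of "x /\<^sub>R norm x"]) (auto simp: orthogonal_commute orthogonal_clauses span_base)
qed

lemma quadratic_form_maximizer_orthogonal: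
  fixes B :: "'a::real_inner \<Rightarrow> 'a \<Rightarrow> real"
  assumes B: "bilinear B" "\<And>v w. B v w = B w v"
    and S: "subspace S" "v \<in> S" "norm v = 1"
    and max: "\<And>y. y \<in> S \<Longrightarrow> norm y = 1 \<Longrightarrow> B y y \<le> B v v"
    and w: "w \<in> S" "v \<bullet> w = 0"
  shows "B v w = 0"
proof (rule linear_le_quadratic_imp_zero)
  fix t :: real
  have bound: "B y y \<le> B v v * (y \<bullet> y)" if "y \<in> S" for y
  proof (cases "y = 0")
    case True
    then show ?thesis using B(1) by (simp add: bilinear_lzero)
  next
    case False
    have "B (y /\<^sub>R norm y) (y /\<^sub>R norm y) \<le> B v v"
      using that False S(1) by (intro max) (auto simp: subspace_scale)
    then have "B y y / (norm y)\<^sup>2 \<le> B v v"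
      using B(1) by (simp add: bilinear_lmul bilinear_rmul power2_eq_square divide_inverse mult_ac)
    then show ?thesis
      using False by (simp add: divide_le_eq dot_square_norm mult.commute)
  qed
  have "B (v + t *\<^sub>R w) (v + t *\<^sub>R w) = B v v + 2 * t * B v w + t\<^sup>2 * B w w"
    using B by (simp add: bilinear_ladd bilinear_radd bilinear_lmul bilinear_rmul power2_eq_square algebra_simps)
  moreover have "(v + t *\<^sub>R w) \<bullet> (v + t *\<^sub>R w) = 1 + t\<^sup>2 * (w \<bullet> w)"
    using S(3) w(2) by (simp add: inner_add_left inner_add_right inner_commute norm_eq_1 power2_eq_square)
  moreover have "v + t *\<^sub>R w \<in> S"
    using S w by (simp add: subspace_add subspace_scale)
  ultimately show "2 * t * B v w \<le> t\<^sup>2 * (B v v * (w \<bullet> w) - B w w)"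
    using bound[of "v + t *\<^sub>R w"] by (simp add: algebra_simps)
qed

lemma quadratic_form_attains_max_on_sphere:
  fixes B :: "'a::euclidean_space \<Rightarrow> 'a \<Rightarrow> real"
  assumes "bilinear B" "subspace S" "S \<inter> sphere 0 1 \<noteq> {}"
  obtains v where "v \<in> S" "norm v = 1" "\<And>y. y \<in> S \<Longrightarrow> norm y = 1 \<Longrightarrow> B y y \<le> B v v"
proof -
  have "compact (S \<inter> sphere 0 1)"
    using closed_subspace[OF assms(2)] by (simp add: closed_Int_compact)
  moreover have "continuous_on (S \<inter> sphere 0 1) (\<lambda>y. B y y)"
    by (rule bilinear_continuous_on_compose[OF continuous_on_id continuous_on_id assms(1)])
  ultimately obtain v where "v \<in> S \<inter> sphere 0 1" "\<forall>y \<in> S \<inter> sphere 0 1. B y y \<le> B v v"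
    using continuous_attains_sup assms(3) by blast
  then show ?thesis
    using that by auto
qed

lemma orthonormal_seq_extend:
  assumes "orthonormal_seq k e" "norm v = 1" "\<And>i. i < k \<Longrightarrow> e i \<bullet> v = 0"
  shows "orthonormal_seq (Suc k) (e(k := v))"
  using assms unfolding orthonormal_seq_def by (auto simp: less_Suc_eq inner_commute norm_eq_1)

(* The variational construction: e k maximises B y y on the unit sphere of the orthogonal
   complement of e 0, ..., e (k - 1). *)
lemma symmetric_bilinear_partial_diagonal:
  fixes B :: "'a::euclidean_space \<Rightarrow> 'a \<Rightarrow> real"
  assumes B: "bilinear B" "\<And>v w. B v w = B w v"
  shows "k \<le> DIM('a) \<Longrightarrow> \<exists>e. orthonormal_seq k e \<and>
           (\<forall>j<k. \<forall>w. (\<forall>i\<le>j. w \<bullet> e i = 0) \<longrightarrow> B (e j) w = 0)"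
proof (induction k)
  case 0
  then show ?case by (simp add: orthonormal_seq_def)
next
  case (Suc k)
  then obtain e where e: "orthonormal_seq k e"
    and diag: "\<forall>j<k. \<forall>w. (\<forall>i\<le>j. w \<bullet> e i = 0) \<longrightarrow> B (e j) w = 0"
    by auto
  define S where "S = {y. \<forall>x \<in> e ` {..<k}. orthogonal x y}"
  have S: "subspace S"
    unfolding S_def by (rule subspace_orthogonal_to_vectors)
  have "card (e ` {..<k}) < DIM('a)"
    using card_image_le[of "{..<k}" e] Suc.prems by simp
  then obtain x where "norm x = 1" "\<And>y. y \<in> e ` {..<k} \<Longrightarrow> orthogonal y x"
    using exists_unit_orthogonal by blast
  then have "x \<in> S \<inter> sphere 0 1"
    by (simp add: S_def)
  then obtain v where v: "v \<in> S" "norm v = 1"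
    and max: "\<And>y. y \<in> S \<Longrightarrow> norm y = 1 \<Longrightarrow> B y y \<le> B v v"
    using quadratic_form_attains_max_on_sphere[OF B(1) S] by blast
  have "e i \<bullet> v = 0" if "i < k" for i
    using v(1) that by (auto simp: S_def orthogonal_def)
  then have "orthonormal_seq (Suc k) (e(k := v))"
    using orthonormal_seq_extend e v(2) by blast
  moreover have "B ((e(k := v)) j) w = 0"
    if j: "j < Suc k" and w: "\<forall>i\<le>j. w \<bullet> (e(k := v)) i = 0" for j w
  proof (cases "j < k")
    case True
    then show ?thesis
      using diag w by auto
  next
    case False
    with j have "j = k" by simp
    have "w \<bullet> e i = 0" if "i < k" for i
      using w[rule_format, of i] \<open>j = k\<close> that by simp
    moreover have "w \<bullet> v = 0"
      using w[rule_format, of k] \<open>j = k\<close> by simp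
    ultimately have "w \<in> S" "v \<bullet> w = 0"
      by (auto simp: S_def orthogonal_def inner_commute)
    then show ?thesis
      using quadratic_form_maximizer_orthogonal[OF B S v max] \<open>j = k\<close> by simp
  qed
  ultimately show ?case by blast
qed

lemma symmetric_bilinear_orthonormal_diagonal:
  fixes B :: "'a::euclidean_space \<Rightarrow> 'a \<Rightarrow> real"
  assumes "bilinear B" "\<And>v w. B v w = B w v"
  obtains e where "orthonormal_seq DIM('a) e"
    "\<And>i j. i < DIM('a) \<Longrightarrow> j < DIM('a) \<Longrightarrow> i \<noteq> j \<Longrightarrow> B (e i) (e j) = 0"
proof -
  obtain e where e: "orthonormal_seq DIM('a) e"
    and diag: "\<forall>j<DIM('a). \<forall>w. (\<forall>i\<le>j. w \<bullet> e i = 0) \<longrightarrow> B (e j) w = 0"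
    using symmetric_bilinear_partial_diagonal[OF assms] by blast
  have "B (e i) (e j) = 0" if "i < j" "j < DIM('a)" for i j
  proof -
    have "\<forall>i'\<le>i. e j \<bullet> e i' = 0"
      using e that unfolding orthonormal_seq_def by auto
    then show ?thesis
      using diag that by simp
  qed
  then show ?thesis
    using e assms(2) by (metis linorder_neqE_nat that)
qed

lemma sum_coordinate_minors_power2_eq_fact:
  fixes u e :: "nat \<Rightarrow> 'a::euclidean_space"
  assumes e: "orthonormal_seq DIM('a) e" and u: "orthonormal_seq l u"
  shows "(\<Sum>k\<in>{..<l} \<rightarrow>\<^sub>E {..<DIM('a)}. (leibniz_det l (\<lambda>i j. u j \<bullet> e (k i)))\<^sup>2) = fact l"
proof -
  let ?P = "{p. p permutes {..<l}}"
  let ?K = "{..<l} \<rightarrow>\<^sub>E {..<DIM('a)}"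
  have gram: "(\<Sum>k\<in>?K. \<Prod>i<l. (u (\<sigma> i) \<bullet> e (k i)) * (u (\<tau> i) \<bullet> e (k i))) = (\<Prod>i<l. u (\<sigma> i) \<bullet> u (\<tau> i))"
    for \<sigma> \<tau>
  proof -
    have "(\<Sum>k\<in>?K. \<Prod>i<l. (u (\<sigma> i) \<bullet> e (k i)) * (u (\<tau> i) \<bullet> e (k i)))
        = (\<Prod>i<l. \<Sum>c<DIM('a). (u (\<sigma> i) \<bullet> e c) * (u (\<tau> i) \<bullet> e c))"
      by (rule prod_sum_PiE[symmetric]) auto
    then show ?thesis
      by (simp add: orthonormal_seq_parseval[OF e])
  qed
  have delta: "(\<Prod>i<l. u (\<sigma> i) \<bullet> u (\<tau> i)) = (if \<sigma> = \<tau> then 1 else 0)"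
    if \<sigma>: "\<sigma> \<in> ?P" and \<tau>: "\<tau> \<in> ?P" for \<sigma> \<tau>
  proof -
    have range: "\<sigma> i < l" "\<tau> i < l" if "i < l" for i
      using that \<sigma> \<tau> permutes_in_image[of _ "{..<l}"] by auto
    show ?thesis
    proof (cases "\<sigma> = \<tau>")
      case True
      then show ?thesis
        using u range by (simp add: orthonormal_seq_def)
    next
      case False
      then obtain i where "i < l" "\<sigma> i \<noteq> \<tau> i"
        using permutes_neq_witness[of \<sigma> l \<tau>] \<sigma> \<tau> by auto
      then have "u (\<sigma> i) \<bullet> u (\<tau> i) = 0"
        using u range by (simp add: orthonormal_seq_def)
      then show ?thesis
        using False \<open>i < l\<close> by (auto intro: prod_zero)
    qed
  qed
  have "(\<Sum>k\<in>?K. (leibniz_det l (\<lambda>i j. u j \<bullet> e (k i)))\<^sup>2)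
      = (\<Sum>\<sigma>\<in>?P. \<Sum>\<tau>\<in>?P. of_int (sign \<sigma> * sign \<tau>) * (\<Prod>i<l. u (\<sigma> i) \<bullet> u (\<tau> i)))"
    unfolding leibniz_det_power2 gram[symmetric]
    by (subst sum.swap, rule sum.cong[OF refl], subst sum.swap) (simp add: sum_distrib_left)
  also have "\<dots> = (\<Sum>\<sigma>\<in>?P. \<Sum>\<tau>\<in>?P. if \<sigma> = \<tau> then 1 else 0)"
    using sign_idempotent[where 'a = nat] by (intro sum.cong refl) (simp add: delta flip: of_int_mult)
  also have "\<dots> = fact l"
    by (simp add: finite_permutations card_permutations)
  finally show ?thesis .
qed


section \<open>Second moments of a probability measure on the sphere\<close>

lemma measure_le_integral:
  fixes f :: "'a \<Rightarrow> real"
  assumes "integrable M f" "A \<subseteq> space M"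
    and "\<And>x. x \<in> space M \<Longrightarrow> 0 \<le> f x" "\<And>x. x \<in> A \<Longrightarrow> 1 \<le> f x"
  shows "measure M A \<le> integral\<^sup>L M f"
proof -
  have "measure M A = integral\<^sup>L M (indicator A)"
    using assms(2) by (simp add: Int_absorb2)
  also have "\<dots> \<le> integral\<^sup>L M f"
    using assms by (intro integral_mono') (auto simp: indicator_def)
  finally show ?thesis .
qed

locale sphere_prob_space = prob_space M for M :: "'a::euclidean_space measure" +
  assumes sets_eq_sphere: "sets M = sets (restrict_space borel (sphere 0 1))"
begin

lemma space_eq_sphere: "space M = sphere 0 1"
  using sets_eq_imp_space_eq[OF sets_eq_sphere] by (simp add: space_restrict_space)

lemma borel_measurable_inner [measurable]: "(\<lambda>x. x \<bullet> w) \<in> borel_measurable M"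
proof -
  have "(\<lambda>x. x \<bullet> w) \<in> borel_measurable (restrict_space borel (sphere (0::'a) 1))"
    by (intro measurable_restrict_space1) simp
  then show ?thesis
    by (simp add: measurable_cong_sets[OF sets_eq_sphere refl])
qed

lemma integrable_inner_mult: "integrable M (\<lambda>x. (x \<bullet> v) * (x \<bullet> w))"
proof (rule integrable_const_bound[where B = "norm v * norm w"])
  show "AE x in M. norm ((x \<bullet> v) * (x \<bullet> w)) \<le> norm v * norm w"
  proof (rule AE_I2)
    fix x assume "x \<in> space M"
    then have "norm x = 1" by (simp add: space_eq_sphere)
    then show "norm ((x \<bullet> v) * (x \<bullet> w)) \<le> norm v * norm w"
      using Cauchy_Schwarz_ineq2[of x v] Cauchy_Schwarz_ineq2[of x w]
      by (simp add: abs_mult mult_mono)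
  qed
qed simp

definition moment_form :: "'a \<Rightarrow> 'a \<Rightarrow> real" where
  "moment_form v w = (\<integral>x. (x \<bullet> v) * (x \<bullet> w) \<partial>M)"

lemma moment_form_commute: "moment_form v w = moment_form w v"
  by (simp add: moment_form_def mult.commute)

lemma bilinear_moment_form: "bilinear moment_form"
proof -
  have "linear (moment_form v)" for v
  proof (rule linearI)
    show "moment_form v (w + w') = moment_form v w + moment_form v w'" for w w'
      using integrable_inner_mult
      by (simp add: moment_form_def inner_add_right distrib_left)
    show "moment_form v (c *\<^sub>R w) = c *\<^sub>R moment_form v w" for c w
      by (simp add: moment_form_def mult.left_commute)
  qed
  then show ?thesis
    unfolding bilinear_def by (metis moment_form_commute ext)
qed

definition principal_axis :: "nat \<Rightarrow> 'a" where
  "principal_axis = (SOME e. orthonormal_seq DIM('a) e \<and>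
     (\<forall>i<DIM('a). \<forall>j<DIM('a). i \<noteq> j \<longrightarrow> moment_form (e i) (e j) = 0))"

lemma principal_axis:
  "orthonormal_seq DIM('a) principal_axis"
  "i < DIM('a) \<Longrightarrow> j < DIM('a) \<Longrightarrow> i \<noteq> j \<Longrightarrow> moment_form (principal_axis i) (principal_axis j) = 0"
proof -
  have "\<exists>e. orthonormal_seq DIM('a) e \<and>
     (\<forall>i<DIM('a). \<forall>j<DIM('a). i \<noteq> j \<longrightarrow> moment_form (e i) (e j) = 0)"
    by (rule symmetric_bilinear_orthonormal_diagonal[OF bilinear_moment_form moment_form_commute]) blast
  then have "orthonormal_seq DIM('a) principal_axis \<and>
     (\<forall>i<DIM('a). \<forall>j<DIM('a). i \<noteq> j \<longrightarrow> moment_form (principal_axis i) (principal_axis j) = 0)"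
    unfolding principal_axis_def by (rule someI_ex)
  then show "orthonormal_seq DIM('a) principal_axis"
    "i < DIM('a) \<Longrightarrow> j < DIM('a) \<Longrightarrow> i \<noteq> j \<Longrightarrow> moment_form (principal_axis i) (principal_axis j) = 0"
    by blast+
qed

definition axis_moment :: "nat \<Rightarrow> real" where
  "axis_moment c = moment_form (principal_axis c) (principal_axis c)"

lemma axis_moment_nonneg: "axis_moment c \<ge> 0"
  unfolding axis_moment_def moment_form_def by (simp add: zero_le_square)

lemma sum_axis_moment: "(\<Sum>c<DIM('a). axis_moment c) = 1"
proof -
  have "(\<Sum>c<DIM('a). axis_moment c) = (\<integral>x. (\<Sum>c<DIM('a). (x \<bullet> principal_axis c) * (x \<bullet> principal_axis c)) \<partial>M)"
    unfolding axis_moment_def moment_form_def by (simp add: integrable_inner_mult)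
  also have "\<dots> = (\<integral>x. 1 \<partial>M)"
    by (intro Bochner_Integration.integral_cong refl)
       (simp add: orthonormal_seq_parseval[OF principal_axis(1)] space_eq_sphere dot_square_norm)
  finally show ?thesis
    by (simp add: prob_space)
qed

lemma product_sigma_finite_copies: "product_sigma_finite (\<lambda>_::'i. M)"
  by (simp add: product_sigma_finite_def sigma_finite_measure_axioms)

lemma integrable_prod_inner_mult:
  "finite I \<Longrightarrow> integrable (PiM I (\<lambda>_. M)) (\<lambda>u. \<Prod>j\<in>I. (u j \<bullet> v j) * (u j \<bullet> w j))"
  by (rule product_sigma_finite.product_integrable_prod[OF product_sigma_finite_copies])
     (auto intro: integrable_inner_mult)

lemma integral_prod_inner_mult:
  "finite I \<Longrightarrow> (\<integral>u. (\<Prod>j\<in>I. (u j \<bullet> v j) * (u j \<bullet> w j)) \<partial>PiM I (\<lambda>_. M))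
     = (\<Prod>j\<in>I. moment_form (v j) (w j))"
  unfolding moment_form_def
  by (rule product_sigma_finite.product_integral_prod[OF product_sigma_finite_copies])
     (auto intro: integrable_inner_mult)

definition axis_minor :: "nat \<Rightarrow> (nat \<Rightarrow> nat) \<Rightarrow> (nat \<Rightarrow> 'a) \<Rightarrow> real" where
  "axis_minor l k u = leibniz_det l (\<lambda>i j. u j \<bullet> principal_axis (k i))"

lemma axis_minor_power2:
  "(axis_minor l k u)\<^sup>2 = (\<Sum>\<sigma> | \<sigma> permutes {..<l}. \<Sum>\<tau> | \<tau> permutes {..<l}. of_int (sign \<sigma> * sign \<tau>) *
     (\<Prod>j<l. (u j \<bullet> principal_axis (k (inv \<sigma> j))) * (u j \<bullet> principal_axis (k (inv \<tau> j)))))"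
  unfolding axis_minor_def leibniz_det_power2
  by (intro sum.cong refl)
     (simp add: prod.distrib prod_permutes_reindex_inv[of _ l "\<lambda>j i. u j \<bullet> principal_axis (k i)"])

lemma integrable_axis_minor_power2: "integrable (PiM {..<l} (\<lambda>_. M)) (\<lambda>u. (axis_minor l k u)\<^sup>2)"
  unfolding axis_minor_power2
  by (intro Bochner_Integration.integrable_sum integrable_mult_right integrable_prod_inner_mult) auto

lemma prod_moment_form_permuted_axes:
  fixes k :: "nat \<Rightarrow> nat"
  assumes k: "k \<in> {..<l} \<rightarrow>\<^sub>E {..<DIM('a)}" "inj_on k {..<l}"
    and \<sigma>: "\<sigma> permutes {..<l}" and \<tau>: "\<tau> permutes {..<l}"
  shows "(\<Prod>j<l. moment_form (principal_axis (k (inv \<sigma> j))) (principal_axis (k (inv \<tau> j))))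
    = (if \<sigma> = \<tau> then \<Prod>i<l. axis_moment (k i) else 0)"
proof (cases "\<sigma> = \<tau>")
  case True
  have "(\<Prod>i<l. axis_moment (k i)) = (\<Prod>j<l. axis_moment (k (inv \<sigma> j)))"
    by (subst prod.permute[OF permutes_inv[OF \<sigma>]]) (simp add: o_def)
  with True show ?thesis
    by (simp add: axis_moment_def)
next
  case False
  then have "inv \<sigma> \<noteq> inv \<tau>"
    using permutes_inv_inv[OF \<sigma>] permutes_inv_inv[OF \<tau>] by metis
  then obtain j where j: "j < l" "inv \<sigma> j \<noteq> inv \<tau> j"
    using permutes_neq_witness[OF permutes_inv[OF \<sigma>] permutes_inv[OF \<tau>]] by blast
  have range: "inv \<sigma> j < l" "inv \<tau> j < l"
    using j(1) permutes_in_image[OF permutes_inv[OF \<sigma>]] permutes_in_image[OF permutes_inv[OF \<tau>]]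
    by auto
  then have "k (inv \<sigma> j) \<noteq> k (inv \<tau> j)"
    using k(2) j(2) by (simp add: inj_on_eq_iff)
  moreover have "k (inv \<sigma> j) < DIM('a)" "k (inv \<tau> j) < DIM('a)"
    using range PiE_mem[OF k(1)] by auto
  ultimately have "moment_form (principal_axis (k (inv \<sigma> j))) (principal_axis (k (inv \<tau> j))) = 0"
    by (intro principal_axis(2))
  with j(1) have "(\<Prod>j<l. moment_form (principal_axis (k (inv \<sigma> j))) (principal_axis (k (inv \<tau> j)))) = 0"
    by (intro prod_zero) auto
  with False show ?thesis
    by simp
qed

lemma integral_axis_minor_power2:
  assumes "k \<in> {..<l} \<rightarrow>\<^sub>E {..<DIM('a)}" "inj_on k {..<l}"
  shows "(\<integral>u. (axis_minor l k u)\<^sup>2 \<partial>PiM {..<l} (\<lambda>_. M)) = fact l * (\<Prod>i<l. axis_moment (k i))"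
proof -
  let ?P = "{\<sigma>. \<sigma> permutes {..<l}}"
  have "(\<integral>u. (axis_minor l k u)\<^sup>2 \<partial>PiM {..<l} (\<lambda>_. M))
      = (\<Sum>\<sigma>\<in>?P. \<Sum>\<tau>\<in>?P. of_int (sign \<sigma> * sign \<tau>) *
          (\<Prod>j<l. moment_form (principal_axis (k (inv \<sigma> j))) (principal_axis (k (inv \<tau> j)))))"
    unfolding axis_minor_power2
    by (simp add: integrable_prod_inner_mult integral_prod_inner_mult)
  also have "\<dots> = (\<Sum>\<sigma>\<in>?P. \<Sum>\<tau>\<in>?P. if \<sigma> = \<tau> then \<Prod>i<l. axis_moment (k i) else 0)"
    using sign_idempotent[where 'a = nat]
    by (intro sum.cong refl) (simp add: prod_moment_form_permuted_axes[OF assms] flip: of_int_mult)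
  also have "\<dots> = fact l * (\<Prod>i<l. axis_moment (k i))"
    by (simp add: finite_permutations card_permutations)
  finally show ?thesis .
qed

lemma integral_sum_axis_minor_power2:
  "(\<integral>u. (\<Sum>k\<in>{..<l} \<rightarrow>\<^sub>E {..<DIM('a)}. (axis_minor l k u)\<^sup>2) \<partial>PiM {..<l} (\<lambda>_. M))
     = fact l * inj_prod_sum axis_moment {..<l} DIM('a)"
proof -
  let ?K = "{..<l} \<rightarrow>\<^sub>E {..<DIM('a)}"
  have "axis_minor l k u = 0" if "\<not> inj_on k {..<l}" for k u
  proof -
    from that obtain a b where ab: "a < l" "b < l" "a \<noteq> b" "k a = k b"
      by (auto simp: inj_on_def)
    show ?thesis
      unfolding axis_minor_def by (rule leibniz_det_identical_rows[of a l b]) (use ab in auto)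
  qed
  then have "(\<integral>u. (axis_minor l k u)\<^sup>2 \<partial>PiM {..<l} (\<lambda>_. M))
      = (if inj_on k {..<l} then fact l * (\<Prod>i<l. axis_moment (k i)) else 0)" if "k \<in> ?K" for k
    using that by (simp add: integral_axis_minor_power2)
  then have "(\<integral>u. (\<Sum>k\<in>?K. (axis_minor l k u)\<^sup>2) \<partial>PiM {..<l} (\<lambda>_. M))
      = (\<Sum>k\<in>?K. if inj_on k {..<l} then fact l * (\<Prod>i<l. axis_moment (k i)) else 0)"
    by (simp add: integrable_axis_minor_power2)
  also have "\<dots> = (\<Sum>k\<in>injections {..<l} DIM('a). fact l * (\<Prod>i<l. axis_moment (k i)))"
    unfolding injections_def by (rule sum.inter_filter[symmetric]) (simp add: finite_PiE)
  also have "\<dots> = fact l * inj_prod_sum axis_moment {..<l} DIM('a)"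
    by (simp add: inj_prod_sum_def sum_distrib_left)
  finally show ?thesis .
qed

end

theorem lemma1:
  fixes M :: "'a::euclidean_space measure" and l :: nat
  assumes "DIM('a) \<ge> 2"
    and "sets M = sets (restrict_space borel (sphere (0::'a) 1))"
    and "prob_space M"
    and "2 \<le> l" and "l \<le> DIM('a)"
  shows "measure (PiM {..<l} (\<lambda>_. M))
           {u \<in> space (PiM {..<l} (\<lambda>_. M)).
              \<forall>i<l. \<forall>j<l. i \<noteq> j \<longrightarrow> u i \<bullet> u j = 0}
         \<le> fact DIM('a) / (fact (DIM('a) - l) * real DIM('a) ^ l)"
proof -
  interpret sphere_prob_space M
    using assms(2,3) by (simp add: sphere_prob_space_def sphere_prob_space_axioms_def)
  let ?N = "PiM {..<l} (\<lambda>_. M)"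
  let ?O = "{u \<in> space ?N. \<forall>i<l. \<forall>j<l. i \<noteq> j \<longrightarrow> u i \<bullet> u j = 0}"
  let ?G = "\<lambda>u. (\<Sum>k\<in>{..<l} \<rightarrow>\<^sub>E {..<DIM('a)}. (axis_minor l k u)\<^sup>2) / fact l"
  have "orthonormal_seq l u" if "u \<in> ?O" for u
    using that by (auto simp: orthonormal_seq_def space_PiM PiE_iff space_eq_sphere dot_square_norm)
  then have G_orthonormal: "?G u = 1" if "u \<in> ?O" for u
    using that by (simp add: axis_minor_def sum_coordinate_minors_power2_eq_fact[OF principal_axis(1)])
  have "measure ?N ?O \<le> integral\<^sup>L ?N ?G"
  proof (rule measure_le_integral)
    show "integrable ?N ?G"
      by (intro integrable_divide_zero Bochner_Integration.integrable_sum integrable_axis_minor_power2)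
    show "0 \<le> ?G u" for u
      by (simp add: sum_nonneg)
    show "1 \<le> ?G u" if "u \<in> ?O" for u
      by (simp only: G_orthonormal[OF that] order_refl)
  qed blast
  also have "integral\<^sup>L ?N ?G = inj_prod_sum axis_moment {..<l} DIM('a)"
    by (simp add: integral_sum_axis_minor_power2)
  also have "\<dots> \<le> falling_fact DIM('a) l * (1 / real DIM('a)) ^ l"
    using maclaurin_inequality[of axis_moment "{..<l}" "DIM('a)"] axis_moment_nonneg
    by (simp add: sum_axis_moment)
  also have "\<dots> = fact DIM('a) / (fact (DIM('a) - l) * real DIM('a) ^ l)"
    using falling_fact_eq_fact_div[OF assms(5)] by (simp add: power_divide)
  finally show ?thesis .
qed

end
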